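(* Let $\alpha_1,\alpha_2\in[-1,1]$ with $\alpha_1\alpha_2<0$ and let $\lambda:=\mathrm i\sqrt{-\alpha_1\alpha_2}$. Then, for each choice of sign $\pm$, as $n\to\infty$, $$\sum_{j=2}^n\frac{\Gamma^2(j)}{\Gamma^2(j\pm\lambda)}=\frac{\Gamma^2(n+1)}{(1\mp2\lambda)\,n\,\Gamma^2(n\pm\lambda)}+O(\log n).$$
   Context: $\Gamma$ denotes the Gamma function (evaluated at complex arguments); $\Gamma^2(z)=(\Gamma(z))^2$. *)

theory Defs
  imports "HOL-Analysis.Analysis" "HOL-Library.Landau_Symbols"
begin

end

(*
  Put a_j = Gamma(j)^2 / Gamma(j+m)^2 with Re m >= 0 (here m = +-lambda is purely imaginary).
  Then a_(j+1) = a_j (j/(j+m))^2 and |j/(j+m)| <= 1, so the a_j are bounded.  The sequence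
  j a_j is an approximate primitive of (1 - 2m) a_j: the forward difference of j a_j differs
  from (1 - 2m) a_j by a defect of size O(|a_j| / j) = O(1/j).  Telescoping, (1 - 2m) times the
  sum of the a_j is (n+1) a_(n+1) up to a sum of defects, which is O(log n) by the harmonic
  bound, and n a_n = Gamma(n+1)^2 / (n Gamma(n+m)^2) is the main term of the expansion.
*)
theory Submission
  imports Defs
begin

lemma Re_pos_notin_nonpos_Ints: "0 < Re z \<Longrightarrow> z \<notin> \<int>\<^sub>\<le>\<^sub>0"
  by (auto elim!: nonpos_Ints_cases')

lemma norm_of_nat_le_norm_add:
  assumes "Re m \<ge> 0"
  shows "real n \<le> norm (of_nat n + m)"
  using complex_Re_le_cmod[of "of_nat n + m"] assms by simp

lemma sum_inverse_le_ln:
  assumes "n \<ge> 1"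
  shows "(\<Sum>j=2..n. 1 / real j) \<le> ln (real n)"
proof -
  have "(\<Sum>j=2..n. 1 / real j) = harm n - 1"
    using assms by (simp add: harm_def sum.atLeast_Suc_atMost numeral_2_eq_2 divide_inverse)
  also have "\<dots> \<le> ln (real n)"
    using euler_mascheroni_sequence_decreasing[of 1 n] assms by (simp add: harm_def)
  finally show ?thesis .
qed

lemma const_bigo_ln: "(\<lambda>_. 1 :: 'a :: real_normed_field) \<in> O[sequentially](\<lambda>n. of_real (ln (real n)))"
proof (rule bigoI[where c = 1])
  show "\<forall>\<^sub>F n in sequentially. norm (1 :: 'a) \<le> 1 * norm (of_real (ln (real n)) :: 'a)"
    using eventually_ge_at_top[of 3]
  proof eventually_elim
    case (elim n)
    have "exp 1 \<le> real n"
      using exp_le elim by linarith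
    then have "1 \<le> ln (real n)"
      using elim by (subst ln_ge_iff) auto
    then show ?case by simp
  qed
qed

lemma bigo_ln_of_norm_bounded:
  fixes f :: "nat \<Rightarrow> 'a :: real_normed_field"
  assumes "\<And>n. n \<ge> 1 \<Longrightarrow> norm (f n) \<le> C"
  shows "f \<in> O[sequentially](\<lambda>n. of_real (ln (real n)))"
proof (rule landau_o.big_trans[OF _ const_bigo_ln])
  show "f \<in> O[sequentially](\<lambda>_. 1)"
    using assms by (intro bigoI[where c = C] eventually_mono[OF eventually_ge_at_top[of 1]]) auto
qed

lemma bigo_ln_sum_of_norm_le_inverse:
  fixes f :: "nat \<Rightarrow> 'a :: real_normed_field"
  assumes "\<And>j. j \<ge> 1 \<Longrightarrow> norm (f j) \<le> C / real j"
  shows "(\<lambda>n. \<Sum>j=2..n. f j) \<in> O[sequentially](\<lambda>n. of_real (ln (real n)))"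
proof (rule bigoI)
  have "C \<ge> 0"
    using assms[of 1] norm_ge_zero[of "f 1"] by linarith
  show "\<forall>\<^sub>F n in sequentially. norm (\<Sum>j=2..n. f j) \<le> C * norm (of_real (ln (real n)) :: 'a)"
    using eventually_ge_at_top[of 1]
  proof eventually_elim
    case (elim n)
    have "norm (\<Sum>j=2..n. f j) \<le> (\<Sum>j=2..n. C * (1 / real j))"
      using assms by (intro order_trans[OF norm_sum sum_mono]) auto
    also have "\<dots> = C * (\<Sum>j=2..n. 1 / real j)"
      by (simp add: sum_distrib_left)
    also have "\<dots> \<le> C * ln (real n)"
      using sum_inverse_le_ln[OF elim] \<open>C \<ge> 0\<close> by (rule mult_left_mono)
    finally show ?case
      using elim by simp
  qed
qed

definition Gamma_sq_quot :: "complex \<Rightarrow> nat \<Rightarrow> complex" where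
  "Gamma_sq_quot m j = Gamma (of_nat j) ^ 2 / Gamma (of_nat j + m) ^ 2"

definition Gamma_sq_quot_defect :: "complex \<Rightarrow> nat \<Rightarrow> complex" where
  "Gamma_sq_quot_defect m n = (1 - 2 * m) * Gamma_sq_quot m n
     - (of_nat (Suc n) * Gamma_sq_quot m (Suc n) - of_nat n * Gamma_sq_quot m n)"

lemma Gamma_sq_quot_Suc:
  assumes "Re m \<ge> 0" "n \<ge> 1"
  shows "Gamma_sq_quot m (Suc n) = Gamma_sq_quot m n * (of_nat n / (of_nat n + m)) ^ 2"
proof -
  have "Gamma (of_nat (Suc n)) = of_nat n * Gamma (of_nat n :: complex)"
    using assms Gamma_plus1[of "of_nat n :: complex"] Re_pos_notin_nonpos_Ints[of "of_nat n"]
    by (simp add: add.commute)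
  moreover have "Gamma (of_nat (Suc n) + m) = (of_nat n + m) * Gamma (of_nat n + m)"
    using assms Gamma_plus1[of "of_nat n + m"] Re_pos_notin_nonpos_Ints[of "of_nat n + m"]
    by (simp add: ac_simps)
  ultimately show ?thesis
    by (simp add: Gamma_sq_quot_def power_mult_distrib power_divide ac_simps)
qed

lemma norm_Gamma_sq_quot_le:
  assumes "Re m \<ge> 0" "n \<ge> 1"
  shows "norm (Gamma_sq_quot m n) \<le> norm (Gamma_sq_quot m 1)"
  using assms(2)
proof (induction n rule: dec_induct)
  case base
  then show ?case by simp
next
  case (step n)
  have "norm (of_nat n / (of_nat n + m)) \<le> 1"
    using norm_of_nat_le_norm_add[OF assms(1), of n] by (simp add: norm_divide divide_le_eq_1)
  then have "norm (Gamma_sq_quot m (Suc n)) \<le> norm (Gamma_sq_quot m n)"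
    unfolding Gamma_sq_quot_Suc[OF assms(1) step.hyps(1)] norm_mult norm_power
    by (intro mult_left_le power_le_one) auto
  with step.IH show ?case by linarith
qed

lemma Gamma_sq_quot_defect_eq:
  assumes "Re m \<ge> 0" "n \<ge> 1"
  shows "Gamma_sq_quot_defect m n = Gamma_sq_quot m n
           * (of_nat n * (2 * m - 3 * m ^ 2) + m ^ 2 * (1 - 2 * m)) / (of_nat n + m) ^ 2"
proof -
  have "of_nat n + m \<noteq> 0"
    using norm_of_nat_le_norm_add[OF assms(1), of n] assms(2) by auto
  then show ?thesis
    unfolding Gamma_sq_quot_defect_def Gamma_sq_quot_Suc[OF assms]
    by (simp add: field_simps) (simp add: algebra_simps power2_eq_square)
qed

lemma norm_Gamma_sq_quot_defect_le:
  assumes "Re m \<ge> 0" "n \<ge> 1"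
  shows "norm (Gamma_sq_quot_defect m n)
           \<le> norm (Gamma_sq_quot m 1) * (norm (2 * m - 3 * m ^ 2) + norm (m ^ 2 * (1 - 2 * m))) / real n"
proof -
  define K where "K = norm (2 * m - 3 * m ^ 2) + norm (m ^ 2 * (1 - 2 * m))"
  have numerator: "norm (of_nat n * (2 * m - 3 * m ^ 2) + m ^ 2 * (1 - 2 * m)) \<le> real n * K"
  proof -
    have "norm (m ^ 2 * (1 - 2 * m)) \<le> real n * norm (m ^ 2 * (1 - 2 * m))"
      using assms(2) by (simp add: mult_le_cancel_right1)
    then show ?thesis
      using norm_triangle_ineq[of "of_nat n * (2 * m - 3 * m ^ 2)" "m ^ 2 * (1 - 2 * m)"]
      by (simp add: K_def norm_mult distrib_left)
  qed
  have denominator: "real n ^ 2 \<le> norm ((of_nat n + m) ^ 2)"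
    using norm_of_nat_le_norm_add[OF assms(1), of n] by (simp add: norm_power power_mono)
  have "norm (Gamma_sq_quot_defect m n)
          = norm (Gamma_sq_quot m n) * (norm (of_nat n * (2 * m - 3 * m ^ 2) + m ^ 2 * (1 - 2 * m))
              / norm ((of_nat n + m) ^ 2))"
    by (simp add: Gamma_sq_quot_defect_eq[OF assms] norm_mult norm_divide)
  also have "\<dots> \<le> norm (Gamma_sq_quot m 1) * (real n * K / real n ^ 2)"
    using norm_Gamma_sq_quot_le[OF assms] numerator denominator assms(2)
    by (intro mult_mono frac_le) (auto simp: K_def)
  also have "\<dots> = norm (Gamma_sq_quot m 1) * K / real n"
    by (simp add: power2_eq_square)
  finally show ?thesis
    by (simp add: K_def)
qed

lemma Gamma_plus1_sq_div_eq:
  assumes "n \<ge> 1"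
  shows "Gamma (of_nat n + 1) ^ 2 / (of_nat n * Gamma (of_nat n + m) ^ 2)
           = of_nat n * Gamma_sq_quot m n"
proof -
  have "Gamma (of_nat n + 1 :: complex) = of_nat n * Gamma (of_nat n)"
    using assms by (intro Gamma_plus1 Re_pos_notin_nonpos_Ints) auto
  with assms show ?thesis
    by (simp add: Gamma_sq_quot_def power2_eq_square)
qed

lemma sum_Gamma_sq_quot_telescope:
  assumes "m \<noteq> 1 / 2" "n \<ge> 2"
  shows "(\<Sum>j=2..n. Gamma_sq_quot m j)
           - Gamma (of_nat n + 1) ^ 2 / ((1 - 2 * m) * of_nat n * Gamma (of_nat n + m) ^ 2)
         = Gamma_sq_quot m n
           + ((\<Sum>j=2..n. Gamma_sq_quot_defect m j) - Gamma_sq_quot_defect m n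
              - 2 * Gamma_sq_quot m 2) / (1 - 2 * m)"
proof -
  define q where "q = 1 - 2 * m"
  have "q \<noteq> 0"
    using assms(1) by (auto simp: q_def field_simps)
  have "q * (\<Sum>j=2..n. Gamma_sq_quot m j)
          = (\<Sum>j=2..n. Gamma_sq_quot_defect m j)
            + (of_nat (Suc n) * Gamma_sq_quot m (Suc n) - 2 * Gamma_sq_quot m 2)"
  proof -
    have "(\<Sum>j=2..n. of_nat (Suc j) * Gamma_sq_quot m (Suc j) - of_nat j * Gamma_sq_quot m j)
            = of_nat (Suc n) * Gamma_sq_quot m (Suc n) - 2 * Gamma_sq_quot m 2"
      using assms(2) sum_Suc_diff[of 2 n "\<lambda>j. of_nat j * Gamma_sq_quot m j"] by simp
    then show ?thesis
      by (simp add: q_def Gamma_sq_quot_defect_def sum_subtractf sum_distrib_left)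
  qed
  moreover have "of_nat (Suc n) * Gamma_sq_quot m (Suc n)
      = q * Gamma_sq_quot m n - Gamma_sq_quot_defect m n + of_nat n * Gamma_sq_quot m n"
    by (simp add: q_def Gamma_sq_quot_defect_def)
  moreover have "Gamma (of_nat n + 1) ^ 2 / (q * of_nat n * Gamma (of_nat n + m) ^ 2)
      = Gamma (of_nat n + 1) ^ 2 / (of_nat n * Gamma (of_nat n + m) ^ 2) / q"
    by (simp add: divide_divide_eq_left ac_simps)
  moreover have "\<dots> = of_nat n * Gamma_sq_quot m n / q"
    using assms(2) by (simp add: Gamma_plus1_sq_div_eq)
  ultimately show ?thesis
    unfolding q_def[symmetric] using \<open>q \<noteq> 0\<close> by (simp add: field_simps)
qed

lemma Gamma_sq_quot_remainder_bigo_ln: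
  assumes "Re m \<ge> 0" "m \<noteq> 1 / 2"
  shows "(\<lambda>n. Gamma_sq_quot m n
           + ((\<Sum>j=2..n. Gamma_sq_quot_defect m j) - Gamma_sq_quot_defect m n
              - 2 * Gamma_sq_quot m 2) / (1 - 2 * m))
         \<in> O[sequentially](\<lambda>n. of_real (ln (real n)))"
proof -
  define K where "K = norm (Gamma_sq_quot m 1) * (norm (2 * m - 3 * m ^ 2) + norm (m ^ 2 * (1 - 2 * m)))"
  have defect_le: "norm (Gamma_sq_quot_defect m n) \<le> K / real n" if "n \<ge> 1" for n
    using norm_Gamma_sq_quot_defect_le[OF assms(1) that] by (simp add: K_def)
  have "K \<ge> 0"
    by (simp add: K_def)
  then have "K / real n \<le> K" if "n \<ge> 1" for n
    using that by (simp add: divide_le_eq mult_le_cancel_left1)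
  with defect_le have defect: "Gamma_sq_quot_defect m \<in> O[sequentially](\<lambda>n. of_real (ln (real n)))"
    by (intro bigo_ln_of_norm_bounded[where C = K]) (meson order_trans)
  have defect_sum: "(\<lambda>n. \<Sum>j=2..n. Gamma_sq_quot_defect m j) \<in> O[sequentially](\<lambda>n. of_real (ln (real n)))"
    using defect_le by (rule bigo_ln_sum_of_norm_le_inverse)
  have quot: "Gamma_sq_quot m \<in> O[sequentially](\<lambda>n. of_real (ln (real n)))"
    using norm_Gamma_sq_quot_le[OF assms(1)] by (rule bigo_ln_of_norm_bounded)
  have const: "(\<lambda>_. 2 * Gamma_sq_quot m 2) \<in> O[sequentially](\<lambda>n. of_real (ln (real n)))"
    by (rule bigo_ln_of_norm_bounded[where C = "norm (2 * Gamma_sq_quot m 2)"]) simp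
  have "1 - 2 * m \<noteq> 0"
    using assms(2) by (auto simp: field_simps)
  with quot defect defect_sum const show ?thesis
    by (intro sum_in_bigo landau_o.big.cdiv_in_iff'[THEN iffD2])
qed

lemma sum_Gamma_sq_quot_asymptotics:
  assumes "Re m \<ge> 0" "m \<noteq> 1 / 2"
  shows "(\<lambda>n. (\<Sum>j=2..n. Gamma (of_nat j) ^ 2 / Gamma (of_nat j + m) ^ 2)
            - Gamma (of_nat n + 1) ^ 2 / ((1 - 2 * m) * of_nat n * Gamma (of_nat n + m) ^ 2))
         \<in> O[sequentially](\<lambda>n. of_real (ln (real n)))"
proof -
  have "\<forall>\<^sub>F n in sequentially.
      (\<Sum>j=2..n. Gamma_sq_quot m j)
        - Gamma (of_nat n + 1) ^ 2 / ((1 - 2 * m) * of_nat n * Gamma (of_nat n + m) ^ 2)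
      = Gamma_sq_quot m n
        + ((\<Sum>j=2..n. Gamma_sq_quot_defect m j) - Gamma_sq_quot_defect m n
           - 2 * Gamma_sq_quot m 2) / (1 - 2 * m)"
    using eventually_ge_at_top[of 2] by eventually_elim (rule sum_Gamma_sq_quot_telescope[OF assms(2)])
  with Gamma_sq_quot_remainder_bigo_ln[OF assms]
  have "(\<lambda>n. (\<Sum>j=2..n. Gamma_sq_quot m j)
        - Gamma (of_nat n + 1) ^ 2 / ((1 - 2 * m) * of_nat n * Gamma (of_nat n + m) ^ 2))
      \<in> O[sequentially](\<lambda>n. of_real (ln (real n)))"
    by (simp only: landau_o.big.in_cong)
  then show ?thesis
    by (simp add: Gamma_sq_quot_def)
qed

theorem lemma3p4:
  fixes a1 a2 s :: real and lam :: complex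
  assumes "a1 \<in> {-1..1}" and "a2 \<in> {-1..1}" and "a1 * a2 < 0"
    and "s \<in> {1, -1}"
    and "lam = \<i> * complex_of_real (sqrt (- a1 * a2))"
  shows "(\<lambda>n::nat. (\<Sum>j=2..n. Gamma (of_nat j :: complex) ^ 2 / Gamma (of_nat j + complex_of_real s * lam) ^ 2)
            - Gamma (of_nat n + 1 :: complex) ^ 2
              / ((1 - 2 * complex_of_real s * lam) * of_nat n * Gamma (of_nat n + complex_of_real s * lam) ^ 2))
         \<in> O[sequentially](\<lambda>n. complex_of_real (ln (real n)))"
proof -
  \<comment> \<open>Only \<open>Re (s * lam) = 0\<close> matters.\<close>
  have "Re (complex_of_real s * lam) \<ge> 0" "complex_of_real s * lam \<noteq> 1 / 2"
    using assms(5) by (auto simp: complex_eq_iff)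
  moreover have "1 - 2 * complex_of_real s * lam = 1 - 2 * (complex_of_real s * lam)"
    by (simp add: mult.assoc)
  ultimately show ?thesis
    by (simp only:) (rule sum_Gamma_sq_quot_asymptotics)
qed

end
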